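(* Let $S$ be a linear subspace of $\mathbb{F}_2^n$ of dimension $d\le 5$, and let $Q:\mathbb{F}_2^n\to\mathbb{F}_2$ be a quadratic function. If there exist complex phases $c_1,\dots,c_n$ (complex numbers of modulus $1$) such that $(-1)^{Q(x)}=\prod_{j=1}^n c_j^{x_j}$ for every $x\in S$, then there exist $c'_1,\dots,c'_n\in\{\pm1,\pm i\}$ such that $(-1)^{Q(x)}=\prod_{j=1}^n (c'_j)^{x_j}$ for every $x\in S$.
   Context: A quadratic function $Q:\mathbb{F}_2^n\to\mathbb{F}_2$ is a polynomial of degree at most $2$ in the coordinates $x_1,\dots,x_n$ with coefficients in $\mathbb{F}_2$. The coordinates $x_j\in\{0,1\}$ are used as integer exponents. *)

theory Defs
  imports "HOL-Analysis.Analysis" "HOL-Library.Z2"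
begin

text \<open>F_2^n is modelled as bit ^ 'n (coordinates indexed by a finite type 'n, n = CARD('n)),
  as a vector space over the field bit = F_2 with scalar multiplication *s.\<close>

definition F2_subspace :: "(bit ^ 'n) set \<Rightarrow> bool" where
  "F2_subspace S \<longleftrightarrow> module.subspace ((*s) :: bit \<Rightarrow> bit ^ 'n \<Rightarrow> bit ^ 'n) S"

definition F2_dim :: "(bit ^ 'n) set \<Rightarrow> nat" where
  "F2_dim S = vector_space.dim ((*s) :: bit \<Rightarrow> bit ^ 'n \<Rightarrow> bit ^ 'n) S"

definition is_quadratic :: "(bit ^ 'n \<Rightarrow> bit) \<Rightarrow> bool" where
  "is_quadratic Q \<longleftrightarrow> (\<exists>(a0::bit) (a::'n \<Rightarrow> bit) (b::'n \<Rightarrow> 'n \<Rightarrow> bit).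
     \<forall>x. Q x = a0 + (\<Sum>i\<in>UNIV. a i * x $ i) + (\<Sum>i\<in>UNIV. \<Sum>j\<in>UNIV. b i j * x $ i * x $ j))"

end

theory Submission
  imports Defs
begin

text \<open>Write \<open>c\<^sub>j = \<i>\<^bsup>t\<^sub>j\<^esup>\<close> with real \<open>t\<^sub>j\<close> and fix a row-reduced spanning family
  \<open>b\<^sub>0, \<dots>, b\<^sub>4\<close> of \<open>S\<close>; let \<open>p\<^sub>j\<close> be the set of those \<open>k\<close> with \<open>b\<^sub>k\<close> having a 1 in
  coordinate \<open>j\<close>. The hypothesis says that for every \<open>K \<subseteq> {0..4}\<close> the sum of the \<open>t\<^sub>j\<close>
  with \<open>|K \<inter> p\<^sub>j|\<close> odd is congruent to \<open>2 Q(\<Sum>\<^sub>K b\<^sub>k)\<close> mod 4. By inclusion--exclusion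
  that sum is \<open>\<Sum> (-2)\<^bsup>|L|-1\<^esup> G(L)\<close> over nonempty \<open>L \<subseteq> K\<close>, where \<open>G(L)\<close> is the total
  weight of the coordinates whose pattern contains \<open>L\<close>. Quadraticity of \<open>Q\<close> makes every
  term with \<open>|L| \<ge> 3\<close> vanish mod 4, so it suffices to find integer weights whose \<open>G\<close>
  agrees with the real one on singletons and mod 2 on pairs. Pivot coordinates and pairs
  occurring as patterns can be corrected exactly; for a pair that occurs as no pattern,
  rounding up the weights of the larger patterns works, because the constraints force
  them into \<open>\<onehalf>\<int>\<close> and the number of odd halves among them is a multiple of 4. This
  last step is where \<open>dim S \<le> 5\<close> enters: such a pair has exactly three complementary
  indices.\<close>

definition int_multiple :: "real \<Rightarrow> real \<Rightarrow> bool" where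
  "int_multiple r x \<longleftrightarrow> (\<exists>z::int. x = r * of_int z)"

lemma int_multiple_0 [simp]: "int_multiple r 0"
  unfolding int_multiple_def by (rule exI[of _ 0]) simp

lemma int_multiple_mult_of_int [simp]: "int_multiple r (r * of_int z)"
  unfolding int_multiple_def by blast

lemma int_multiple_1_iff: "int_multiple 1 x \<longleftrightarrow> x \<in> \<int>"
  unfolding int_multiple_def Ints_def by auto

lemma int_multiple_add: "int_multiple r x \<Longrightarrow> int_multiple r y \<Longrightarrow> int_multiple r (x + y)"
  unfolding int_multiple_def by (metis distrib_left of_int_add)

lemma int_multiple_uminus: "int_multiple r x \<Longrightarrow> int_multiple r (- x)"
  unfolding int_multiple_def by (metis mult_minus_right of_int_minus)

lemma int_multiple_diff: "int_multiple r x \<Longrightarrow> int_multiple r y \<Longrightarrow> int_multiple r (x - y)"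
  using int_multiple_add[of r x "- y"] int_multiple_uminus[of r y] by simp

lemma int_multiple_sum: "(\<And>i. i \<in> A \<Longrightarrow> int_multiple r (f i)) \<Longrightarrow> int_multiple r (sum f A)"
  by (induction A rule: infinite_finite_induct) (auto intro: int_multiple_add)

lemma int_multiple_mult_cancel_left:
  "c \<noteq> 0 \<Longrightarrow> int_multiple (c * r) (c * x) \<longleftrightarrow> int_multiple r x"
  unfolding int_multiple_def by (auto simp: mult.assoc)

lemma int_multiple_numeral_Ints: "int_multiple (numeral m) x \<Longrightarrow> x \<in> \<int>"
  unfolding int_multiple_def by auto

lemma Ints_if_diff_of_int: "x - of_int z \<in> \<int> \<Longrightarrow> (x::real) \<in> \<int>"
  using Ints_add[of "x - of_int z" "of_int z"] by simp

section \<open>Parity sums and inclusion--exclusion\<close>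

lemma sum_Pow_neg_two_power:
  assumes "finite A"
  shows "(\<Sum>L\<in>Pow A. (-2::real) ^ card L) = (-1) ^ card A"
  using prod_add[OF assms, of "\<lambda>_. -2 :: real" "\<lambda>_. 1"] by simp

lemma odd_card_Int_expansion:
  assumes "finite K"
  shows "(of_bool (odd (card (K \<inter> P))) :: real)
     = (\<Sum>L\<in>Pow K. if L = {} then 0 else (-2) ^ (card L - 1) * of_bool (L \<subseteq> P))"
    (is "_ = (\<Sum>L\<in>Pow K. ?e L)")
proof -
  have "(\<Sum>L\<in>Pow K. (-2::real) ^ card L * of_bool (L \<subseteq> P)) = (\<Sum>L\<in>Pow (K \<inter> P). (-2) ^ card L)"
  proof -
    have "Pow (K \<inter> P) = {L \<in> Pow K. L \<subseteq> P}" by auto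
    then show ?thesis
      using assms by (simp add: sum.inter_filter[symmetric] of_bool_def if_distrib cong: if_cong)
  qed
  also have "\<dots> = (-1) ^ card (K \<inter> P)" using assms sum_Pow_neg_two_power[of "K \<inter> P"] by simp
  finally have alt: "(\<Sum>L\<in>Pow K. (-2::real) ^ card L * of_bool (L \<subseteq> P)) = (-1) ^ card (K \<inter> P)" .
  have "(-2::real) ^ card L * of_bool (L \<subseteq> P) = of_bool (L = {}) - 2 * ?e L" if "L \<in> Pow K" for L
  proof -
    have "finite L" using that assms finite_subset by auto
    then show ?thesis by (cases "L = {}") (auto simp: power_eq_if)
  qed
  then have "(-1) ^ card (K \<inter> P) = (\<Sum>L\<in>Pow K. of_bool (L = {}) - 2 * ?e L)"
    unfolding alt[symmetric] by (rule sum.cong[OF refl])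
  also have "\<dots> = 1 - 2 * (\<Sum>L\<in>Pow K. ?e L)"
    using assms by (simp add: sum_subtractf sum_distrib_left of_bool_def sum.delta)
  finally show ?thesis by (cases "even (card (K \<inter> P))") (auto simp: algebra_simps)
qed

definition parity_sum :: "('j::finite \<Rightarrow> 'a::comm_ring_1) \<Rightarrow> ('j \<Rightarrow> 'i set) \<Rightarrow> 'i set \<Rightarrow> 'a" where
  "parity_sum w p K = (\<Sum>j\<in>UNIV. w j * of_bool (odd (card (K \<inter> p j))))"

definition cover_sum :: "('j::finite \<Rightarrow> 'a::comm_ring_1) \<Rightarrow> ('j \<Rightarrow> 'i set) \<Rightarrow> 'i set \<Rightarrow> 'a" where
  "cover_sum w p L = (\<Sum>j\<in>UNIV. w j * of_bool (L \<subseteq> p j))"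

definition pattern_weight :: "('j::finite \<Rightarrow> 'a::comm_ring_1) \<Rightarrow> ('j \<Rightarrow> 'i set) \<Rightarrow> 'i set \<Rightarrow> 'a" where
  "pattern_weight w p R = (\<Sum>j\<in>UNIV. w j * of_bool (p j = R))"

definition pairs :: "'a set \<Rightarrow> 'a set set" where
  "pairs K = {L \<in> Pow K. card L = 2}"

lemma parity_sum_expansion:
  fixes w :: "'j::finite \<Rightarrow> real"
  assumes "finite K"
  shows "parity_sum w p K
       = (\<Sum>L\<in>Pow K. if L = {} then 0 else (-2) ^ (card L - 1) * cover_sum w p L)"
proof -
  have "parity_sum w p K
      = (\<Sum>j\<in>UNIV. \<Sum>L\<in>Pow K. w j * (if L = {} then 0 else (-2) ^ (card L - 1) * of_bool (L \<subseteq> p j)))"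
    unfolding parity_sum_def by (simp add: odd_card_Int_expansion[OF assms] sum_distrib_left)
  also have "\<dots> = (\<Sum>L\<in>Pow K. \<Sum>j\<in>UNIV. w j * (if L = {} then 0 else (-2) ^ (card L - 1) * of_bool (L \<subseteq> p j)))"
    by (rule sum.swap)
  also have "\<dots> = (\<Sum>L\<in>Pow K. if L = {} then 0 else (-2) ^ (card L - 1) * cover_sum w p L)"
  proof (rule sum.cong[OF refl])
    fix L
    show "(\<Sum>j\<in>UNIV. w j * (if L = {} then 0 else (-2) ^ (card L - 1) * of_bool (L \<subseteq> p j)))
        = (if L = {} then 0 else (-2) ^ (card L - 1) * cover_sum w p L)"
      unfolding cover_sum_def sum_distrib_left by (cases "L = {}") (simp_all add: mult_ac)
  qed
  finally show ?thesis .
qed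

lemma sum_nonempty_subsets_by_card:
  fixes g :: "'i set \<Rightarrow> real"
  assumes "finite K"
  shows "(\<Sum>L\<in>Pow K. if L = {} then 0 else (-2) ^ (card L - 1) * g L)
     = (\<Sum>k\<in>K. g {k}) - 2 * (\<Sum>L\<in>pairs K. g L)
       + (\<Sum>L\<in>{L\<in>Pow K. 3 \<le> card L}. (-2) ^ (card L - 1) * g L)"
proof -
  have fin: "finite (Pow K)" using assms by simp
  have "(\<Sum>L\<in>Pow K. if L = {} then 0 else (-2) ^ (card L - 1) * g L)
     = (\<Sum>L\<in>Pow K. (if card L = 1 then g L else 0) - 2 * (if card L = 2 then g L else 0)
           + (if 3 \<le> card L then (-2) ^ (card L - 1) * g L else 0))"
  proof (rule sum.cong[OF refl])
    fix L assume "L \<in> Pow K"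
    then have "finite L" using assms finite_subset by auto
    then have "L \<noteq> {} \<longleftrightarrow> 1 \<le> card L" by (simp add: Suc_le_eq card_gt_0_iff)
    then show "(if L = {} then 0 else (-2) ^ (card L - 1) * g L)
      = (if card L = 1 then g L else 0) - 2 * (if card L = 2 then g L else 0)
           + (if 3 \<le> card L then (-2) ^ (card L - 1) * g L else 0)"
      by (cases "card L = 1"; cases "card L = 2") auto
  qed
  also have "\<dots> = (\<Sum>L\<in>{L\<in>Pow K. card L = 1}. g L) - 2 * (\<Sum>L\<in>pairs K. g L)
           + (\<Sum>L\<in>{L\<in>Pow K. 3 \<le> card L}. (-2) ^ (card L - 1) * g L)"
    unfolding pairs_def sum.inter_filter[OF fin]
    by (simp add: sum.distrib sum_subtractf sum_distrib_left)
  also have "{L\<in>Pow K. card L = 1} = (\<lambda>k. {k}) ` K"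
    by (auto simp: card_1_singleton_iff)
  also have "(\<Sum>L\<in>(\<lambda>k. {k}) ` K. g L) = (\<Sum>k\<in>K. g {k})"
    by (rule sum.reindex[unfolded comp_def]) (auto simp: inj_on_def)
  finally show ?thesis .
qed

definition high_part :: "('j::finite \<Rightarrow> real) \<Rightarrow> ('j \<Rightarrow> 'i set) \<Rightarrow> 'i set \<Rightarrow> real" where
  "high_part w p K = (\<Sum>L\<in>{L\<in>Pow K. 3 \<le> card L}. (-2) ^ (card L - 1) * cover_sum w p L)"

lemma parity_sum_by_card:
  assumes "finite K"
  shows "parity_sum w p K
       = (\<Sum>k\<in>K. cover_sum w p {k}) - 2 * (\<Sum>L\<in>pairs K. cover_sum w p L) + high_part w p K"
  unfolding high_part_def parity_sum_expansion[OF assms, of w p]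
    sum_nonempty_subsets_by_card[OF assms, of "cover_sum w p"] ..

lemma high_part_eq_0:
  assumes "finite K" "card K \<le> 2"
  shows "high_part w p K = 0"
proof -
  have "\<not> 3 \<le> card L" if "L \<subseteq> K" for L
    using card_mono[OF assms(1) that] assms(2) by linarith
  then have none: "{L \<in> Pow K. 3 \<le> card L} = {}"
    by blast
  show ?thesis unfolding high_part_def none by simp
qed

lemma parity_sum_congruent_transfer:
  fixes w w' :: "'j::finite \<Rightarrow> real"
  assumes "finite K" and "int_multiple 4 (parity_sum w p K - c)"
    and "\<And>L. L \<subseteq> K \<Longrightarrow> L \<noteq> {} \<Longrightarrow>
           int_multiple 4 ((-2) ^ (card L - 1) * (cover_sum w' p L - cover_sum w p L))"
  shows "int_multiple 4 (parity_sum w' p K - c)"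
proof -
  have split: "parity_sum w' p K - c = (parity_sum w p K - c)
      + (\<Sum>L\<in>Pow K. if L = {} then 0 else (-2) ^ (card L - 1) * (cover_sum w' p L - cover_sum w p L))"
    unfolding parity_sum_expansion[OF assms(1)]
    by (simp add: sum.distrib[symmetric] if_distrib right_diff_distrib cong: if_cong)
  have "int_multiple 4 (\<Sum>L\<in>Pow K. if L = {} then 0
           else (-2) ^ (card L - 1) * (cover_sum w' p L - cover_sum w p L))"
    using assms(3) by (intro int_multiple_sum) auto
  then show ?thesis
    unfolding split by (rule int_multiple_add[OF assms(2)])
qed

definition up_sum :: "'i set \<Rightarrow> ('i set \<Rightarrow> 'a::comm_monoid_add) \<Rightarrow> 'i set \<Rightarrow> 'a" where
  "up_sum U f L = (\<Sum>R\<in>{R \<in> Pow U. L \<subseteq> R}. f R)"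

lemma up_sum_eq_sum_Pow_Diff:
  assumes "L \<subseteq> U"
  shows "up_sum U f L = (\<Sum>M\<in>Pow (U - L). f (L \<union> M))"
proof -
  have "{R \<in> Pow U. L \<subseteq> R} = (\<lambda>M. L \<union> M) ` Pow (U - L)"
  proof
    show "(\<lambda>M. L \<union> M) ` Pow (U - L) \<subseteq> {R \<in> Pow U. L \<subseteq> R}" using assms by auto
    show "{R \<in> Pow U. L \<subseteq> R} \<subseteq> (\<lambda>M. L \<union> M) ` Pow (U - L)"
    proof
      fix R assume "R \<in> {R \<in> Pow U. L \<subseteq> R}"
      then show "R \<in> (\<lambda>M. L \<union> M) ` Pow (U - L)" by (intro image_eqI[of _ _ "R - L"]) auto
    qed
  qed
  moreover have "inj_on (\<lambda>M. L \<union> M) (Pow (U - L))"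
    unfolding inj_on_def by blast
  ultimately show ?thesis
    unfolding up_sum_def by (simp add: sum.reindex)
qed

lemma up_sum_eq_self:
  assumes "finite U" "L \<subseteq> U" and "\<And>R. R \<subseteq> U \<Longrightarrow> L \<subset> R \<Longrightarrow> f R = 0"
  shows "up_sum U f L = f L"
proof -
  have "up_sum U f L = (\<Sum>R\<in>{R \<in> Pow U. L \<subseteq> R}. if R = L then f L else 0)"
    unfolding up_sum_def using assms(3) by (intro sum.cong refl) auto
  also have "\<dots> = f L" using assms(1,2) by (simp add: sum.delta')
  finally show ?thesis .
qed

lemma up_sum_shift:
  assumes "L \<subseteq> U" "P \<subseteq> U - L"
  shows "up_sum (U - L) (\<lambda>M. g (L \<union> M)) P = up_sum U g (L \<union> P)"
  using assms up_sum_eq_sum_Pow_Diff[of "L \<union> P" U g]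
  by (simp add: up_sum_eq_sum_Pow_Diff Diff_eq Int_assoc Un_assoc)

lemma up_sum_add: "up_sum U (\<lambda>R. f R + g R) L = up_sum U f L + up_sum U g L"
  unfolding up_sum_def by (rule sum.distrib)

lemma of_int_up_sum: "of_int (up_sum U f L) = up_sum U (\<lambda>R. of_int (f R)) L"
  unfolding up_sum_def by (rule of_int_sum)

lemma cover_sum_eq_up_sum:
  assumes "finite U" and "\<And>j. p j \<subseteq> U"
  shows "cover_sum w p L = up_sum U (pattern_weight w p) L"
proof -
  have "up_sum U (pattern_weight w p) L = (\<Sum>j\<in>UNIV. \<Sum>R\<in>{R \<in> Pow U. L \<subseteq> R}. if p j = R then w j else 0)"
    unfolding up_sum_def pattern_weight_def by (subst sum.swap) (simp add: of_bool_def if_distrib cong: if_cong)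
  also have "\<dots> = cover_sum w p L"
    unfolding cover_sum_def using assms by (intro sum.cong refl) (simp add: sum.delta' of_bool_def)
  finally show ?thesis ..
qed

lemma pattern_weight_eq_0: "R \<notin> range p \<Longrightarrow> pattern_weight w p R = 0"
  unfolding pattern_weight_def by (auto intro!: sum.neutral)

lemma of_int_pattern_weight: "of_int (pattern_weight n p R) = pattern_weight (\<lambda>j. of_int (n j)) p R"
  unfolding pattern_weight_def by (simp add: of_int_sum)

lemma ex_pattern_weight_eq:
  fixes A :: "'i set \<Rightarrow> 'a::comm_ring_1" and p :: "'j::finite \<Rightarrow> 'i set"
  assumes "\<And>R. R \<notin> range p \<Longrightarrow> A R = 0"
  shows "\<exists>w. \<forall>R. pattern_weight w p R = A R"
proof (intro exI allI)
  fix R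
  define w where "w j = (if inv p (p j) = j then A (p j) else 0)" for j
  show "pattern_weight w p R = A R"
  proof (cases "R \<in> range p")
    case True
    then have "pattern_weight w p R = (\<Sum>j\<in>UNIV. if j = inv p R then A R else 0)"
      unfolding pattern_weight_def w_def
      by (intro sum.cong refl) (auto simp: f_inv_into_f)
    then show ?thesis by simp
  next
    case False
    then have "p j \<noteq> R" for j by auto
    then show ?thesis unfolding pattern_weight_def using assms[OF False] by simp
  qed
qed

section \<open>Ceiling defects of half-integers\<close>

lemma sum_Pow_insert:
  assumes "finite K" "a \<notin> K"
  shows "(\<Sum>L\<in>Pow (insert a K). f L) = (\<Sum>L\<in>Pow K. f L) + (\<Sum>L\<in>Pow K. f (insert a L))"
proof -
  have "inj_on (insert a) (Pow K)"
    using assms(2) unfolding inj_on_def by (metis Pow_iff insert_ident subsetD)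
  moreover have "Pow K \<inter> insert a ` Pow K = {}" using assms(2) by auto
  ultimately show ?thesis
    using assms(1) by (simp add: Pow_insert sum.union_disjoint sum.reindex)
qed

lemma ceiling_half_defect: "2 * \<lceil>real_of_int m / 2\<rceil> - m = of_bool (odd m)"
proof -
  have "\<lceil>real_of_int m / 2\<rceil> = - \<lfloor>real_of_int (- m) / 2\<rfloor>" by (simp add: ceiling_def)
  then have "\<lceil>real_of_int m / 2\<rceil> = - ((- m) div 2)"
    using floor_divide_of_int_eq[of "- m" 2] by simp
  then have "2 * \<lceil>real_of_int m / 2\<rceil> - m = m mod 2" by presburger
  then show ?thesis by (simp add: of_bool_odd_eq_mod_2)
qed

text \<open>The seven constraints pin the values down to half-integers; the defect
  \<open>\<lceil>x\<rceil> - x\<close> of a half-integer is \<open>1/2\<close> exactly at the odd halves, and a parity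
  count shows that the number of odd halves is a multiple of 4.\<close>
lemma ceiling_defects_even_explicit:
  fixes a b c ab ac bc abc :: real
  assumes h: "a + b + c + ab + ac + bc + abc \<in> \<int>"
    and ha: "a + ab + ac + abc \<in> \<int>" and hb: "b + ab + bc + abc \<in> \<int>" and hc: "c + ac + bc + abc \<in> \<int>"
    and hab: "2 * (ab + abc) \<in> \<int>" and hac: "2 * (ac + abc) \<in> \<int>" and hbc: "2 * (bc + abc) \<in> \<int>"
  shows "int_multiple 2 ((\<lceil>a\<rceil> - a) + (\<lceil>b\<rceil> - b) + (\<lceil>c\<rceil> - c) + (\<lceil>ab\<rceil> - ab)
           + (\<lceil>ac\<rceil> - ac) + (\<lceil>bc\<rceil> - bc) + (\<lceil>abc\<rceil> - abc))"
proof -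
  obtain z za zb zc wab wac wbc :: int where
    z: "a + b + c + ab + ac + bc + abc = of_int z" and
    za: "a + ab + ac + abc = of_int za" and zb: "b + ab + bc + abc = of_int zb" and
    zc: "c + ac + bc + abc = of_int zc" and wab: "2 * (ab + abc) = of_int wab" and
    wac: "2 * (ac + abc) = of_int wac" and wbc: "2 * (bc + abc) = of_int wbc"
    using h ha hb hc hab hac hbc by (elim Ints_cases) blast
  define e where "e = 2 * z - 2 * (za + zb + zc) + wab + wac + wbc"
  have abc': "abc = of_int e / 2" using z za zb zc wab wac wbc unfolding e_def by (simp add: field_simps)
  have ab': "ab = of_int (wab - e) / 2" using wab abc' by (simp add: field_simps)
  have ac': "ac = of_int (wac - e) / 2" using wac abc' by (simp add: field_simps)
  have bc': "bc = of_int (wbc - e) / 2" using wbc abc' by (simp add: field_simps)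
  have a': "a = of_int (2 * za - wab - wac + e) / 2" using za ab' ac' abc' by (simp add: field_simps)
  have b': "b = of_int (2 * zb - wab - wbc + e) / 2" using zb ab' bc' abc' by (simp add: field_simps)
  have c': "c = of_int (2 * zc - wac - wbc + e) / 2" using zc ac' bc' abc' by (simp add: field_simps)
  define ms where "ms = [2 * za - wab - wac + e, 2 * zb - wab - wbc + e, 2 * zc - wac - wbc + e,
    wab - e, wac - e, wbc - e, e]"
  have "odd e \<longleftrightarrow> (odd wab \<noteq> (odd wac \<noteq> odd wbc))"
    by (cases "even wab"; cases "even wac"; cases "even wbc"; simp add: e_def)
  then have "4 dvd (\<Sum>m\<leftarrow>ms. 2 * \<lceil>real_of_int m / 2\<rceil> - m)"
    unfolding ceiling_half_defect ms_def by (cases "odd wab"; cases "odd wac"; cases "odd wbc") simp_all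
  then obtain y where y: "(\<Sum>m\<leftarrow>ms. 2 * \<lceil>real_of_int m / 2\<rceil> - m) = 4 * y" by blast
  have "(\<lceil>a\<rceil> - a) + (\<lceil>b\<rceil> - b) + (\<lceil>c\<rceil> - c) + (\<lceil>ab\<rceil> - ab)
           + (\<lceil>ac\<rceil> - ac) + (\<lceil>bc\<rceil> - bc) + (\<lceil>abc\<rceil> - abc) = of_int (\<Sum>m\<leftarrow>ms. 2 * \<lceil>real_of_int m / 2\<rceil> - m) / 2"
    unfolding a' b' c' ab' ac' bc' abc' ms_def by (simp add: field_simps)
  also have "\<dots> = 2 * of_int y" using y by simp
  finally show ?thesis by simp
qed

lemma ceiling_defects_even:
  fixes f :: "'a set \<Rightarrow> real"
  assumes "card D = 3" and "f {} = 0"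
    and "up_sum D f {} \<in> \<int>"
    and "\<And>a. a \<in> D \<Longrightarrow> up_sum D f {a} \<in> \<int>"
    and "\<And>P. P \<subseteq> D \<Longrightarrow> card P = 2 \<Longrightarrow> 2 * up_sum D f P \<in> \<int>"
  shows "int_multiple 2 (\<Sum>M\<in>Pow D. \<lceil>f M\<rceil> - f M)"
proof -
  obtain a b c where D: "D = {a, b, c}" and distinct: "a \<noteq> b" "a \<noteq> c" "b \<noteq> c"
    using assms(1) by (auto simp: card_3_iff)
  have up_sum_expand: "up_sum {a, b, c} f P = (\<Sum>M\<in>Pow ({a, b, c} - P). f (P \<union> M))"
    if "P \<subseteq> {a, b, c}" for P
    using up_sum_eq_sum_Pow_Diff[OF that] .
  have "{a, b, c} - {a} = {b, c}" "{a, b, c} - {b} = {a, c}" "{a, b, c} - {c} = {a, b}"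
    "{a, b, c} - {a, b} = {c}" "{a, b, c} - {a, c} = {b}" "{a, b, c} - {b, c} = {a}"
    using distinct by auto
  note sets = this
  show ?thesis
    using ceiling_defects_even_explicit[of "f {a}" "f {b}" "f {c}" "f {a, b}" "f {a, c}" "f {b, c}" "f {a, b, c}"]
      assms(3) assms(4)[of a] assms(4)[of b] assms(4)[of c]
      assms(5)[of "{a, b}"] assms(5)[of "{a, c}"] assms(5)[of "{b, c}"]
    unfolding D using distinct assms(2)
    by (simp add: up_sum_expand sets sum_Pow_insert insert_commute algebra_simps)
qed

section \<open>Integer weights for a phase system\<close>

lemma pairs_singleton: "pairs {k} = {}"
  unfolding pairs_def by (auto simp: subset_singleton_iff)

lemma pairs_doubleton: "k \<noteq> l \<Longrightarrow> pairs {k, l} = {{k, l}}"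
  unfolding pairs_def by (auto simp: card_2_iff)

text \<open>Coordinate \<open>j\<close> carries the real exponent \<open>t j\<close> (the phase is \<open>\<i>\<^bsup>t j\<^esup>\<close>) and the
  pattern \<open>p j \<subseteq> {0..4}\<close>; \<open>q K\<close> is the value of the quadratic function at the sum of the
  basis vectors indexed by \<open>K\<close>.\<close>

locale phase_parity_system =
  fixes t :: "'j::finite \<Rightarrow> real" and p :: "'j \<Rightarrow> nat set" and q :: "nat set \<Rightarrow> int"
  assumes patterns_bounded: "p j \<subseteq> {..<5}"
    and singleton_pattern: "k < 5 \<Longrightarrow> (\<exists>j. p j = {k}) \<or> (\<forall>j. k \<notin> p j)"
    and parity_sum_congruent: "K \<subseteq> {..<5} \<Longrightarrow> int_multiple 4 (parity_sum t p K - 2 * of_int (q K))"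
    and q_quadratic: "K \<subseteq> {..<5} \<Longrightarrow>
          even (q K - (\<Sum>k\<in>K. q {k}) - (\<Sum>L\<in>pairs K. q L - (\<Sum>k\<in>L. q {k})))"
begin

abbreviation U :: "nat set" where "U \<equiv> {..<5}"

abbreviation G :: "nat set \<Rightarrow> real" where "G \<equiv> cover_sum t p"

abbreviation T :: "nat set \<Rightarrow> real" where "T \<equiv> pattern_weight t p"

lemma G_eq_up_sum: "G L = up_sum U T L"
  using cover_sum_eq_up_sum[of U p t] patterns_bounded by simp

lemma cover_sum_singleton_congruent:
  assumes "k < 5"
  shows "int_multiple 4 (G {k} - 2 * of_int (q {k}))"
  using parity_sum_congruent[of "{k}"] parity_sum_by_card[of "{k}" t p] assms
  by (simp add: pairs_singleton high_part_eq_0)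

lemma cover_sum_pair_congruent:
  assumes "k < 5" "l < 5" "k \<noteq> l"
  shows "int_multiple 2 (G {k, l} - (of_int (q {k}) + of_int (q {l}) - of_int (q {k, l})))"
proof -
  have "parity_sum t p {k, l} = G {k} + G {l} - 2 * G {k, l}"
    using parity_sum_by_card[of "{k, l}" t p] assms by (simp add: pairs_doubleton high_part_eq_0 card_insert_if)
  moreover have "int_multiple 4 (parity_sum t p {k, l} - 2 * of_int (q {k, l}))"
    using assms by (intro parity_sum_congruent) auto
  ultimately have "int_multiple 4 (G {k} + G {l} - 2 * G {k, l} - 2 * of_int (q {k, l}))"
    by simp
  then have "int_multiple 4 ((G {k} + G {l} - 2 * G {k, l} - 2 * of_int (q {k, l}))
      - (G {k} - 2 * of_int (q {k})) - (G {l} - 2 * of_int (q {l})))"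
    using cover_sum_singleton_congruent assms by (blast intro: int_multiple_diff)
  then have "int_multiple (2 * 2) (2 * - (G {k, l} - (of_int (q {k}) + of_int (q {l}) - of_int (q {k, l}))))"
    by (simp add: algebra_simps)
  then show ?thesis
    by (subst (asm) int_multiple_mult_cancel_left) (auto dest: int_multiple_uminus)
qed

lemma cover_sum_singleton_Ints:
  assumes "k < 5"
  shows "G {k} \<in> \<int>"
proof (rule Ints_if_diff_of_int)
  show "G {k} - of_int (2 * q {k}) \<in> \<int>"
    using int_multiple_numeral_Ints[OF cover_sum_singleton_congruent[OF assms]] by simp
qed

lemma cover_sum_pair_Ints:
  assumes "L \<subseteq> U" "card L = 2"
  shows "G L \<in> \<int>"
proof -
  obtain k l where "L = {k, l}" "k \<noteq> l" "k < 5" "l < 5"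
    using assms by (auto simp: card_2_iff)
  then have "G L - of_int (q {k} + q {l} - q {k, l}) \<in> \<int>"
    using int_multiple_numeral_Ints[OF cover_sum_pair_congruent[of k l]] by simp
  then show ?thesis by (rule Ints_if_diff_of_int)
qed

lemma low_part_congruent:
  assumes "K \<subseteq> U"
  shows "int_multiple 4 ((\<Sum>k\<in>K. G {k}) - 2 * (\<Sum>L\<in>pairs K. G L) - 2 * of_int (q K))"
proof -
  obtain z where "q K - (\<Sum>k\<in>K. q {k}) - (\<Sum>L\<in>pairs K. q L - (\<Sum>k\<in>L. q {k})) = 2 * z"
    using q_quadratic[OF assms] by blast
  then have "q K = (\<Sum>k\<in>K. q {k}) + (\<Sum>L\<in>pairs K. q L - (\<Sum>k\<in>L. q {k})) + 2 * z"
    by simp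
  then have qK: "of_int (q K) = (\<Sum>k\<in>K. of_int (q {k}))
      + (\<Sum>L\<in>pairs K. of_int (q L) - (\<Sum>k\<in>L. of_int (q {k}))) + 2 * (of_int z :: real)"
    by (simp add: of_int_sum)
  have singles: "int_multiple 4 (\<Sum>k\<in>K. G {k} - 2 * of_int (q {k}))"
    using assms by (intro int_multiple_sum cover_sum_singleton_congruent) auto
  have "int_multiple 2 (\<Sum>L\<in>pairs K. G L - ((\<Sum>k\<in>L. of_int (q {k})) - of_int (q L)))"
  proof (rule int_multiple_sum)
    fix L assume "L \<in> pairs K"
    then obtain k l where "L = {k, l}" "k \<noteq> l" "k < 5" "l < 5"
      using assms unfolding pairs_def by (auto simp: card_2_iff)
    then show "int_multiple 2 (G L - ((\<Sum>k\<in>L. of_int (q {k})) - of_int (q L)))"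
      using cover_sum_pair_congruent by simp
  qed
  then have doubles: "int_multiple 4 (2 * (\<Sum>L\<in>pairs K. G L - ((\<Sum>k\<in>L. of_int (q {k})) - of_int (q L))))"
    using int_multiple_mult_cancel_left[of 2 2] by simp
  have "(\<Sum>k\<in>K. G {k}) - 2 * (\<Sum>L\<in>pairs K. G L) - 2 * of_int (q K)
     = (\<Sum>k\<in>K. G {k} - 2 * of_int (q {k}))
       - 2 * (\<Sum>L\<in>pairs K. G L - ((\<Sum>k\<in>L. of_int (q {k})) - of_int (q L))) + 4 * of_int (- z)"
    unfolding qK by (simp add: sum_subtractf sum_distrib_left sum.distrib algebra_simps)
  then show ?thesis
    by (simp only:) (rule int_multiple_add[OF int_multiple_diff[OF singles doubles] int_multiple_mult_of_int])
qed

lemma high_part_congruent: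
  assumes "K \<subseteq> U"
  shows "int_multiple 4 (high_part t p K)"
proof -
  have "finite K" using assms finite_subset by blast
  then have "high_part t p K = (parity_sum t p K - 2 * of_int (q K))
        - ((\<Sum>k\<in>K. G {k}) - 2 * (\<Sum>L\<in>pairs K. G L) - 2 * of_int (q K))"
    by (simp add: parity_sum_by_card)
  then show ?thesis
    by (simp only:) (rule int_multiple_diff[OF parity_sum_congruent[OF assms] low_part_congruent[OF assms]])
qed

lemma cover_sum_large_congruent:
  assumes "L \<subseteq> U" "3 \<le> card L"
  shows "int_multiple 4 ((-2) ^ (card L - 1) * G L)"
  using assms
proof (induction "card L" arbitrary: L rule: less_induct)
  case less
  have fin: "finite L" using less.prems(1) finite_subset by blast
  define smaller where "smaller = {L' \<in> Pow L. 3 \<le> card L' \<and> L' \<noteq> L}"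
  have "{L' \<in> Pow L. 3 \<le> card L'} = insert L smaller"
    using less.prems unfolding smaller_def by auto
  then have "high_part t p L = (-2) ^ (card L - 1) * G L + (\<Sum>L'\<in>smaller. (-2) ^ (card L' - 1) * G L')"
    using fin unfolding high_part_def by (simp add: smaller_def)
  moreover have "int_multiple 4 (\<Sum>L'\<in>smaller. (-2) ^ (card L' - 1) * G L')"
  proof (rule int_multiple_sum)
    fix L' assume L': "L' \<in> smaller"
    then have "card L' < card L" using fin unfolding smaller_def by (auto intro: psubset_card_mono)
    then show "int_multiple 4 ((-2) ^ (card L' - 1) * G L')"
      using less.hyps L' less.prems(1) unfolding smaller_def by auto
  qed
  ultimately show ?case
    using int_multiple_diff[OF high_part_congruent[OF less.prems(1)]] by fastforce
qed

lemma cover_sum_triple_Ints: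
  assumes "L \<subseteq> U" "card L = 3"
  shows "G L \<in> \<int>"
proof -
  have "int_multiple (4 * 1) (4 * G L)"
    using cover_sum_large_congruent[OF assms(1)] assms(2) by simp
  then show ?thesis by (simp only: int_multiple_mult_cancel_left int_multiple_1_iff)
qed

lemma cover_sum_quadruple_Ints:
  assumes "L \<subseteq> U" "card L = 4"
  shows "2 * G L \<in> \<int>"
proof -
  have "int_multiple 4 (- (4 * (2 * G L)))"
    using cover_sum_large_congruent[OF assms(1)] assms(2) by simp
  then have "int_multiple (4 * 1) (4 * (2 * G L))"
    using int_multiple_uminus by fastforce
  then show ?thesis by (simp only: int_multiple_mult_cancel_left int_multiple_1_iff)
qed

text \<open>Integer pattern weights: patterns of size at least 3 are rounded up; present pairs and
  then present singletons are corrected so that the up-sums reproduce \<open>G\<close> exactly.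
  Absent pairs cannot be corrected, and there the parity of the rounded-up weights must be
  controlled (\<open>absent_pair_parity\<close>).\<close>

definition large_round :: "nat set \<Rightarrow> int" where
  "large_round R = (if 3 \<le> card R then \<lceil>T R\<rceil> else 0)"

definition pair_round :: "nat set \<Rightarrow> int" where
  "pair_round R = (if card R = 2 \<and> R \<in> range p then \<lfloor>G R\<rfloor> - up_sum U large_round R else 0)"

definition singleton_round :: "nat set \<Rightarrow> int" where
  "singleton_round R = (if card R = 1 \<and> R \<in> range p
     then \<lfloor>G R\<rfloor> - up_sum U (\<lambda>R. pair_round R + large_round R) R else 0)"

definition rounded_weight :: "nat set \<Rightarrow> int" where
  "rounded_weight R = singleton_round R + (pair_round R + large_round R)"

lemma rounded_weight_absent: "R \<notin> range p \<Longrightarrow> rounded_weight R = 0"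
  unfolding rounded_weight_def singleton_round_def pair_round_def large_round_def
  by (simp add: pattern_weight_eq_0)

lemma card_less_if_psubset: "R \<subseteq> U \<Longrightarrow> L \<subset> R \<Longrightarrow> card L < card R"
  using finite_subset psubset_card_mono by blast

lemma up_sum_rounded_singleton:
  assumes "k < 5"
  shows "of_int (up_sum U rounded_weight {k}) = G {k}"
proof (cases "{k} \<in> range p")
  case True
  have "up_sum U singleton_round {k} = singleton_round {k}"
  proof (rule up_sum_eq_self)
    fix R assume "R \<subseteq> U" "{k} \<subset> R"
    then have "card R \<noteq> 1" using card_less_if_psubset[of R "{k}"] by simp
    then show "singleton_round R = 0" by (simp add: singleton_round_def)
  qed (use assms in auto)
  then have "up_sum U rounded_weight {k} = \<lfloor>G {k}\<rfloor>"
    unfolding rounded_weight_def using True by (subst up_sum_add) (simp add: singleton_round_def)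
  then show ?thesis
    using cover_sum_singleton_Ints[OF assms] by (simp add: Ints_def)
next
  case False
  then have unused: "k \<notin> p j" for j
    using singleton_pattern[OF assms] by auto
  then have "rounded_weight R = 0" if "{k} \<subseteq> R" for R
    using that by (intro rounded_weight_absent) auto
  then have "up_sum U rounded_weight {k} = 0"
    unfolding up_sum_def by (auto intro: sum.neutral)
  moreover have "G {k} = 0"
    using unused by (simp add: cover_sum_def)
  ultimately show ?thesis by simp
qed

lemma absent_pair_parity:
  assumes L: "L \<subseteq> U" "card L = 2" and absent: "L \<notin> range p"
  shows "int_multiple 2 (of_int (up_sum U large_round L) - G L)"
proof -
  define D where "D = U - L"
  define f where "f M = T (L \<union> M)" for M
  have up_sum_f: "up_sum D f P = G (L \<union> P)" if "P \<subseteq> D" for P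
    using up_sum_shift[OF L(1) that[unfolded D_def]] G_eq_up_sum unfolding D_def f_def by simp
  have card_LP: "card (L \<union> P) = 2 + card P" if "P \<subseteq> D" for P
    using that L finite_subset unfolding D_def by (subst card_Un_disjoint) auto
  have f_empty: "f {} = 0" using absent unfolding f_def by (simp add: pattern_weight_eq_0)
  have "int_multiple 2 (\<Sum>M\<in>Pow D. \<lceil>f M\<rceil> - f M)"
  proof (rule ceiling_defects_even)
    show "card D = 3" using L unfolding D_def by (subst card_Diff_subset) (auto intro: finite_subset)
    show "f {} = 0" by (fact f_empty)
    show "up_sum D f {} \<in> \<int>" using cover_sum_pair_Ints[OF L] by (simp add: up_sum_f)
    show "up_sum D f {a} \<in> \<int>" if "a \<in> D" for a
    proof -
      have "L \<union> {a} \<subseteq> U" "card (L \<union> {a}) = 3" using that L card_LP[of "{a}"] unfolding D_def by auto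
      then show ?thesis using cover_sum_triple_Ints up_sum_f[of "{a}"] that by simp
    qed
    show "2 * up_sum D f P \<in> \<int>" if "P \<subseteq> D" "card P = 2" for P
    proof -
      have "L \<union> P \<subseteq> U" "card (L \<union> P) = 4" using that L card_LP[of P] unfolding D_def by auto
      then show ?thesis using cover_sum_quadruple_Ints up_sum_f[of P] that by simp
    qed
  qed
  moreover have "(of_int (up_sum U large_round L) :: real) = (\<Sum>M\<in>Pow D. of_int \<lceil>f M\<rceil>)"
  proof -
    have "large_round (L \<union> M) = \<lceil>f M\<rceil>" if "M \<subseteq> D" for M
    proof (cases "M = {}")
      case False
      then have "card M > 0" using that finite_subset[of M D] unfolding D_def by auto
      then show ?thesis using card_LP[OF that] unfolding large_round_def f_def by simp
    qed (use f_empty in \<open>simp add: large_round_def L\<close>)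
    then show ?thesis
      unfolding up_sum_eq_sum_Pow_Diff[OF L(1)] D_def of_int_sum by (intro sum.cong) auto
  qed
  moreover have "G L = (\<Sum>M\<in>Pow D. f M)"
    using up_sum_f[of "{}"] unfolding up_sum_def by (simp add: Pow_def)
  ultimately show ?thesis by (simp add: sum_subtractf)
qed

lemma up_sum_rounded_pair:
  assumes L: "L \<subseteq> U" "card L = 2"
  shows "int_multiple 2 (of_int (up_sum U rounded_weight L) - G L)"
proof -
  have "up_sum U singleton_round L = 0"
    unfolding up_sum_def
  proof (rule sum.neutral, rule ballI)
    fix R assume "R \<in> {R \<in> Pow U. L \<subseteq> R}"
    then have "card L \<le> card R" using card_mono[of R L] finite_subset[of R U] by auto
    then show "singleton_round R = 0" using L by (simp add: singleton_round_def)
  qed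
  moreover have "up_sum U pair_round L = pair_round L"
  proof (rule up_sum_eq_self)
    fix R assume "R \<subseteq> U" "L \<subset> R"
    then have "card R \<noteq> 2" using card_less_if_psubset[of R L] L by simp
    then show "pair_round R = 0" by (simp add: pair_round_def)
  qed (use L in auto)
  ultimately have split: "up_sum U rounded_weight L = pair_round L + up_sum U large_round L"
    unfolding rounded_weight_def up_sum_add by simp
  show ?thesis
  proof (cases "L \<in> range p")
    case True
    then have "up_sum U rounded_weight L = \<lfloor>G L\<rfloor>" unfolding split pair_round_def using L by simp
    then show ?thesis using cover_sum_pair_Ints[OF L] by (simp add: Ints_def)
  next
    case False
    then show ?thesis unfolding split pair_round_def using absent_pair_parity[OF L False] by simp
  qed
qed

lemma up_sum_rounded_congruent:
  assumes L: "L \<subseteq> U" "L \<noteq> {}"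
  shows "int_multiple 4 ((-2) ^ (card L - 1) * (of_int (up_sum U rounded_weight L) - G L))"
proof -
  have "card L \<noteq> 0" using L finite_subset[OF L(1)] by simp
  then consider "card L = 1" | "card L = 2" | "3 \<le> card L" by linarith
  then show ?thesis
  proof cases
    case 1
    then obtain k where "L = {k}" by (auto simp: card_1_singleton_iff)
    then show ?thesis using up_sum_rounded_singleton[of k] L by simp
  next
    case 2
    have "int_multiple (2 * 2) (2 * (of_int (up_sum U rounded_weight L) - G L))"
      using up_sum_rounded_pair[OF L(1) 2] by (subst int_multiple_mult_cancel_left) simp_all
    then show ?thesis using 2 int_multiple_uminus by fastforce
  next
    case 3
    then have "card L - 1 = Suc (Suc (card L - 3))" by simp
    then have "(-2) ^ (card L - 1) * of_int (up_sum U rounded_weight L)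
        = (4::real) * of_int ((-2) ^ (card L - 3) * up_sum U rounded_weight L)"
      by simp
    then have "int_multiple 4 ((-2) ^ (card L - 1) * of_int (up_sum U rounded_weight L))"
      by (simp only: int_multiple_mult_of_int)
    from int_multiple_diff[OF this cover_sum_large_congruent[OF L(1) 3]]
    show ?thesis by (simp add: algebra_simps)
  qed
qed

theorem ex_integer_solution:
  "\<exists>n :: 'j \<Rightarrow> int. \<forall>K \<subseteq> U. int_multiple 4 (parity_sum (\<lambda>j. of_int (n j)) p K - 2 * of_int (q K))"
proof -
  obtain n :: "'j \<Rightarrow> int" where n: "\<And>R. pattern_weight n p R = rounded_weight R"
    using ex_pattern_weight_eq[of p rounded_weight] rounded_weight_absent by blast
  have cover_n: "cover_sum (\<lambda>j. of_int (n j)) p L = of_int (up_sum U rounded_weight L)" for L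
  proof -
    have "cover_sum (\<lambda>j. of_int (n j)) p L = up_sum U (pattern_weight (\<lambda>j. of_int (n j)) p) L"
      by (rule cover_sum_eq_up_sum) (simp_all add: patterns_bounded)
    also have "\<dots> = of_int (up_sum U rounded_weight L)"
      unfolding of_int_up_sum of_int_pattern_weight[symmetric] n ..
    finally show ?thesis .
  qed
  show ?thesis
  proof (intro exI allI impI)
    fix K assume K: "K \<subseteq> U"
    show "int_multiple 4 (parity_sum (\<lambda>j. of_int (n j)) p K - 2 * of_int (q K))"
    proof (rule parity_sum_congruent_transfer[OF _ parity_sum_congruent[OF K]])
      show "finite K" using K finite_subset by blast
      show "int_multiple 4 ((-2) ^ (card L - 1) * (cover_sum (\<lambda>j. of_int (n j)) p L - G L))"
        if "L \<subseteq> K" "L \<noteq> {}" for L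
        unfolding cover_n using that K by (intro up_sum_rounded_congruent) auto
    qed
  qed
qed

end

section \<open>Row-reduced spanning families over \<open>\<bbbF>\<^sub>2\<close>\<close>

definition is_pivot :: "nat \<Rightarrow> (nat \<Rightarrow> bit ^ 'n) \<Rightarrow> nat \<Rightarrow> 'n \<Rightarrow> bool" where
  "is_pivot m b k j \<longleftrightarrow> b k $ j = 1 \<and> (\<forall>l<m. l \<noteq> k \<longrightarrow> b l $ j = 0)"

definition row_reduced :: "nat \<Rightarrow> (nat \<Rightarrow> bit ^ 'n) \<Rightarrow> bool" where
  "row_reduced m b \<longleftrightarrow> (\<forall>k<m. b k = 0 \<or> (\<exists>j. is_pivot m b k j))"

lemma bit_vec_add_self [simp]: "(x :: bit ^ 'n) + x = 0"
  by (simp add: vec_eq_iff)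

lemma subset_sum_add:
  fixes b :: "'i \<Rightarrow> bit ^ 'n"
  assumes "finite K" "finite L"
  shows "(\<Sum>k\<in>K. b k) + (\<Sum>k\<in>L. b k) = (\<Sum>k\<in>(K - L) \<union> (L - K). b k)"
proof -
  have "(\<Sum>k\<in>K. b k) = (\<Sum>k\<in>K - L. b k) + (\<Sum>k\<in>K \<inter> L. b k)"
    "(\<Sum>k\<in>L. b k) = (\<Sum>k\<in>L - K. b k) + (\<Sum>k\<in>K \<inter> L. b k)"
    using assms by (metis Int_commute sum.Int_Diff add.commute)+
  moreover have "(\<Sum>k\<in>(K - L) \<union> (L - K). b k) = (\<Sum>k\<in>K - L. b k) + (\<Sum>k\<in>L - K. b k)"
    using assms by (intro sum.union_disjoint) auto
  ultimately show ?thesis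
    by (simp add: algebra_simps)
qed

lemma span_eq_subset_sums:
  fixes b :: "nat \<Rightarrow> bit ^ 'n"
  shows "vec.span (b ` {..<m}) = (\<lambda>K. \<Sum>k\<in>K. b k) ` Pow {..<m}"
proof
  show "(\<lambda>K. \<Sum>k\<in>K. b k) ` Pow {..<m} \<subseteq> vec.span (b ` {..<m})"
    by (auto intro!: vec.span_sum) (auto intro: vec.span_base)
  have "vec.subspace ((\<lambda>K. \<Sum>k\<in>K. b k) ` Pow {..<m})"
  proof (rule vec.subspaceI)
    show "0 \<in> (\<lambda>K. \<Sum>k\<in>K. b k) ` Pow {..<m}"
      by (rule image_eqI[of _ _ "{}"]) auto
  next
    fix x y assume "x \<in> (\<lambda>K. \<Sum>k\<in>K. b k) ` Pow {..<m}" "y \<in> (\<lambda>K. \<Sum>k\<in>K. b k) ` Pow {..<m}"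
    then obtain K L where "K \<subseteq> {..<m}" "L \<subseteq> {..<m}" "x = (\<Sum>k\<in>K. b k)" "y = (\<Sum>k\<in>L. b k)"
      by auto
    then show "x + y \<in> (\<lambda>K. \<Sum>k\<in>K. b k) ` Pow {..<m}"
      using subset_sum_add[of K L b] finite_subset[of _ "{..<m}"]
      by (intro image_eqI[of _ _ "(K - L) \<union> (L - K)"]) auto
  next
    fix c :: bit and x assume "x \<in> (\<lambda>K. \<Sum>k\<in>K. b k) ` Pow {..<m}"
    then show "c *s x \<in> (\<lambda>K. \<Sum>k\<in>K. b k) ` Pow {..<m}"
      by (cases c) (auto intro: image_eqI[of _ _ "{}"])
  qed
  moreover have "b ` {..<m} \<subseteq> (\<lambda>K. \<Sum>k\<in>K. b k) ` Pow {..<m}"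
    by (auto intro!: image_eqI[of _ _ "{_}"])
  ultimately show "vec.span (b ` {..<m}) \<subseteq> (\<lambda>K. \<Sum>k\<in>K. b k) ` Pow {..<m}"
    by (rule vec.span_minimal[rotated])
qed

lemma clear_pivots:
  fixes b :: "nat \<Rightarrow> bit ^ 'n"
  assumes piv: "\<And>k. k < m \<Longrightarrow> b k \<noteq> 0 \<Longrightarrow> is_pivot m b k (piv k)"
  obtains v' where "v + v' \<in> vec.span (b ` {..<m})" and "\<And>k. k < m \<Longrightarrow> b k \<noteq> 0 \<Longrightarrow> v' $ piv k = 0"
proof
  define s where "s = (\<Sum>l<m. (v $ piv l) *s b l)"
  show "v + (v + s) \<in> vec.span (b ` {..<m})"
    unfolding s_def add.assoc[symmetric] by (auto intro!: vec.span_sum vec.span_scale) (auto intro: vec.span_base)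
  fix k assume k: "k < m" "b k \<noteq> 0"
  have terms: "(v $ piv l) * b l $ piv k = (if l = k then v $ piv k else 0)" if "l < m" for l
    using piv[OF k] piv[OF that] that by (cases "b l = 0") (auto simp: is_pivot_def)
  have "s $ piv k = (\<Sum>l<m. if l = k then v $ piv k else 0)"
    unfolding s_def sum_component vector_smult_component by (rule sum.cong[OF refl], rule terms) simp
  then have "s $ piv k = v $ piv k"
    using k by simp
  then show "(v + s) $ piv k = 0" by simp
qed

text \<open>If \<open>v $ j = 1\<close>, coordinate \<open>j\<close> becomes a pivot of the appended member \<open>v\<close>.\<close>
definition adjoin :: "nat \<Rightarrow> (nat \<Rightarrow> bit ^ 'n) \<Rightarrow> bit ^ 'n \<Rightarrow> 'n \<Rightarrow> nat \<Rightarrow> bit ^ 'n" where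
  "adjoin m b v j k = (if k = m then v else b k + (b k $ j) *s v)"

lemma row_reduced_adjoin:
  assumes piv: "\<And>k. k < m \<Longrightarrow> b k \<noteq> 0 \<Longrightarrow> is_pivot m b k (piv k)"
    and v_piv: "\<And>k. k < m \<Longrightarrow> b k \<noteq> 0 \<Longrightarrow> v $ piv k = 0"
    and i: "v \<noteq> 0 \<Longrightarrow> v $ i = 1"
  shows "row_reduced (Suc m) (adjoin m b v i)"
  unfolding row_reduced_def
proof (intro allI impI)
  fix k assume "k < Suc m"
  then consider "k = m" | "k < m" "b k = 0" | "k < m" "b k \<noteq> 0" by linarith
  then show "adjoin m b v i k = 0 \<or> (\<exists>j. is_pivot (Suc m) (adjoin m b v i) k j)"
  proof cases
    case 1
    have "adjoin m b v i l $ i = 0" if "v \<noteq> 0" "l < m" for l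
      using i[OF that(1)] that(2) by (simp add: adjoin_def)
    then show ?thesis using 1 i by (auto simp: is_pivot_def adjoin_def less_Suc_eq)
  next
    case 2
    then show ?thesis by (simp add: adjoin_def)
  next
    case 3
    then have "is_pivot (Suc m) (adjoin m b v i) k (piv k)"
      using piv[OF 3] v_piv 3 by (auto simp: is_pivot_def adjoin_def less_Suc_eq)
    then show ?thesis by blast
  qed
qed

lemma span_adjoin:
  assumes v': "v + v' \<in> vec.span (b ` {..<m})"
  shows "vec.span (adjoin m b v' j ` {..<Suc m}) = vec.span (insert v (b ` {..<m}))"
  unfolding vec.span_eq
proof (intro conjI subsetI)
  have "v + v' \<in> vec.span (insert v (b ` {..<m}))"
    using v' vec.span_mono[OF subset_insertI] by blast
  then have "v + (v + v') \<in> vec.span (insert v (b ` {..<m}))"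
    by (rule vec.span_add[OF vec.span_base[OF insertI1]])
  then have v'_span: "v' \<in> vec.span (insert v (b ` {..<m}))"
    by (simp add: add.assoc[symmetric])
  fix x assume "x \<in> adjoin m b v' j ` {..<Suc m}"
  then obtain k where k: "k < Suc m" and x: "x = adjoin m b v' j k" by auto
  show "x \<in> vec.span (insert v (b ` {..<m}))"
  proof (cases "k = m")
    case True
    then show ?thesis using v'_span x by (simp add: adjoin_def)
  next
    case False
    then have "b k \<in> vec.span (insert v (b ` {..<m}))" using k by (intro vec.span_base) auto
    then show ?thesis using v'_span False x by (simp add: adjoin_def vec.span_add vec.span_scale)
  qed
next
  let ?B' = "adjoin m b v' j ` {..<Suc m}"
  have v'_span: "v' \<in> vec.span ?B'" by (rule vec.span_base) (auto simp: adjoin_def)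
  have b_span: "b k \<in> vec.span ?B'" if "k < m" for k
  proof -
    have "b k = adjoin m b v' j k + (b k $ j) *s v'" using that by (simp add: adjoin_def add.assoc)
    moreover have "adjoin m b v' j k \<in> vec.span ?B'" using that by (intro vec.span_base) auto
    ultimately show ?thesis by (metis v'_span vec.span_add vec.span_scale)
  qed
  have "vec.span (b ` {..<m}) \<subseteq> vec.span ?B'"
    using b_span by (intro vec.span_minimal) auto
  then have "(v + v') + v' \<in> vec.span ?B'"
    using v' by (blast intro: vec.span_add[OF _ v'_span])
  then have "v \<in> vec.span ?B'"
    by (simp add: add.assoc)
  fix x assume "x \<in> insert v (b ` {..<m})"
  then show "x \<in> vec.span ?B'" using \<open>v \<in> _\<close> b_span by auto
qed

lemma row_reduced_insert:
  fixes b :: "nat \<Rightarrow> bit ^ 'n"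
  assumes "row_reduced m b"
  obtains b' where "row_reduced (Suc m) b'"
    and "vec.span (b' ` {..<Suc m}) = vec.span (insert v (b ` {..<m}))"
proof -
  obtain piv where piv: "\<And>k. k < m \<Longrightarrow> b k \<noteq> 0 \<Longrightarrow> is_pivot m b k (piv k)"
    using assms unfolding row_reduced_def by metis
  obtain v' where v': "v + v' \<in> vec.span (b ` {..<m})"
    and v'_piv: "\<And>k. k < m \<Longrightarrow> b k \<noteq> 0 \<Longrightarrow> v' $ piv k = 0"
    using clear_pivots[OF piv] by blast
  define j where "j = (SOME j. v' $ j = 1)"
  have "v' $ j = 1" if nonzero: "v' \<noteq> 0"
  proof -
    obtain i where "v' $ i \<noteq> 0" using nonzero by (metis vec_eq_iff zero_index)
    then have "v' $ i = 1" by simp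
    then show ?thesis unfolding j_def by (rule someI)
  qed
  then show ?thesis
    using that row_reduced_adjoin[OF piv v'_piv] span_adjoin[OF v'] by blast
qed

lemma ex_row_reduced_span:
  fixes g :: "nat \<Rightarrow> bit ^ 'n"
  shows "\<exists>b. row_reduced m b \<and> vec.span (b ` {..<m}) = vec.span (g ` {..<m})"
proof (induction m)
  case 0
  show ?case by (auto simp: row_reduced_def)
next
  case (Suc m)
  then obtain b where b: "row_reduced m b" "vec.span (b ` {..<m}) = vec.span (g ` {..<m})"
    by blast
  obtain b' where "row_reduced (Suc m) b'"
    and "vec.span (b' ` {..<Suc m}) = vec.span (insert (g m) (b ` {..<m}))"
    using row_reduced_insert[OF b(1)] by blast
  moreover have "vec.span (insert (g m) (b ` {..<m})) = vec.span (g ` {..<Suc m})"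
    unfolding lessThan_Suc image_insert vec.span_insert b(2) ..
  ultimately show ?case by auto
qed

lemma subspace_eq_subset_sums:
  fixes S :: "(bit ^ 'n) set"
  assumes "F2_subspace S" "F2_dim S \<le> m"
  obtains b where "row_reduced m b" and "S = (\<lambda>K. \<Sum>k\<in>K. b k) ` Pow {..<m}"
proof -
  obtain B where B: "B \<subseteq> S" "vec.independent B" "S \<subseteq> vec.span B" "card B = vec.dim S"
    by (rule vec.basis_exists)
  have "finite B" using vec.finiteI_independent[OF B(2)] .
  then obtain h where h: "bij_betw h {0..<card B} B" using ex_bij_betw_nat_finite by blast
  define g where "g k = (if k < card B then h k else 0)" for k
  have "card B \<le> m" using B(4) assms(2) unfolding F2_dim_def by simp
  have "S = vec.span B"
    using vec.span_subspace[OF B(1,3)] assms(1) unfolding F2_subspace_def by simp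
  also have "\<dots> = vec.span (g ` {..<m})"
    unfolding vec.span_eq
  proof (intro conjI subsetI)
    fix x assume "x \<in> B"
    then obtain k where "k < card B" "x = g k"
      using h unfolding bij_betw_def g_def by (metis atLeastLessThan_iff imageE)
    then show "x \<in> vec.span (g ` {..<m})"
      using \<open>card B \<le> m\<close> by (intro vec.span_base) auto
  next
    fix x assume "x \<in> g ` {..<m}"
    then show "x \<in> vec.span B"
      using h unfolding bij_betw_def g_def by (auto intro: vec.span_base vec.span_zero)
  qed
  finally obtain b where "row_reduced m b" "S = vec.span (b ` {..<m})"
    using ex_row_reduced_span[of m g] by auto
  then show ?thesis using that span_eq_subset_sums by blast
qed

section \<open>Quadratic functions\<close>

lemma bit_add_self: "(x::bit) + x = 0"
  by simp

definition polar :: "(bit ^ 'n \<Rightarrow> bit) \<Rightarrow> bit ^ 'n \<Rightarrow> bit ^ 'n \<Rightarrow> bit" where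
  "polar Q x y = Q (x + y) + Q x + Q y + Q 0"

lemma is_quadratic_polar_add_left:
  fixes Q :: "bit ^ 'n \<Rightarrow> bit"
  assumes "is_quadratic Q"
  shows "polar Q (x + x') y = polar Q x y + polar Q x' y"
proof -
  obtain a0 a c where Q: "\<And>x. Q x = a0 + (\<Sum>i\<in>UNIV. a i * x $ i) + (\<Sum>i\<in>UNIV. \<Sum>j\<in>UNIV. c i j * x $ i * x $ j)"
    using assms unfolding is_quadratic_def by blast
  define lin where "lin x = (\<Sum>i\<in>UNIV. a i * x $ i)" for x :: "bit ^ 'n"
  define bil where "bil x y = (\<Sum>i\<in>UNIV. \<Sum>j\<in>UNIV. c i j * x $ i * y $ j)" for x y :: "bit ^ 'n"
  have Q': "Q x = a0 + lin x + bil x x" for x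
    unfolding lin_def bil_def Q ..
  have lin: "lin (x + y) = lin x + lin y" "lin 0 = 0" for x y
    unfolding lin_def by (simp_all only: vector_add_component distrib_left sum.distrib) simp
  have bil: "bil (x + x') y = bil x y + bil x' y" "bil y (x + x') = bil y x + bil y x'" "bil 0 0 = 0"
    for x x' y
    unfolding bil_def by (simp_all only: vector_add_component distrib_left distrib_right sum.distrib) simp
  have polar: "polar Q x y = bil x y + bil y x" for x y
  proof -
    have "polar Q x y = (a0 + a0 + (a0 + a0)) + (lin x + lin x) + (lin y + lin y)
        + (bil x x + bil x x) + (bil y y + bil y y) + (bil x y + bil y x)"
      unfolding polar_def Q' lin bil by (simp only: add_ac add_0_left add_0_right)
    then show ?thesis by (simp only: bit_add_self add_0_left)
  qed
  show ?thesis unfolding polar bil by (simp only: add_ac)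
qed

lemma is_quadratic_polar_sum_left:
  fixes Q :: "bit ^ 'n \<Rightarrow> bit"
  assumes "is_quadratic Q"
  shows "polar Q (\<Sum>k\<in>K. b k) y = (\<Sum>k\<in>K. polar Q (b k) y)"
proof (induction K rule: infinite_finite_induct)
  case (insert k K)
  then show ?case by (simp add: is_quadratic_polar_add_left[OF assms])
qed (simp_all add: polar_def del: add_bit_eq_xor)

lemma pairs_insert:
  assumes "a \<notin> K"
  shows "pairs (insert a K) = pairs K \<union> (\<lambda>k. {k, a}) ` K"
proof
  show "pairs K \<union> (\<lambda>k. {k, a}) ` K \<subseteq> pairs (insert a K)"
    using assms unfolding pairs_def by (auto simp: card_insert_if)
  show "pairs (insert a K) \<subseteq> pairs K \<union> (\<lambda>k. {k, a}) ` K"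
  proof
    fix L assume L: "L \<in> pairs (insert a K)"
    then obtain x y where xy: "L = {x, y}" "x \<noteq> y" by (auto simp: pairs_def card_2_iff)
    show "L \<in> pairs K \<union> (\<lambda>k. {k, a}) ` K"
    proof (cases "a \<in> L")
      case False
      then show ?thesis using L unfolding pairs_def by auto
    next
      case True
      then have "L = {y, a} \<and> y \<in> K \<or> L = {x, a} \<and> x \<in> K"
        using xy L unfolding pairs_def by auto
      then show ?thesis by auto
    qed
  qed
qed

lemma quadratic_subset_sum:
  fixes Q :: "bit ^ 'n \<Rightarrow> bit" and b :: "'i \<Rightarrow> bit ^ 'n"
  assumes Q: "is_quadratic Q" "Q 0 = 0" and "finite K"
  shows "Q (\<Sum>k\<in>K. b k) = (\<Sum>k\<in>K. Q (b k)) + (\<Sum>L\<in>pairs K. Q (\<Sum>k\<in>L. b k) + (\<Sum>k\<in>L. Q (b k)))"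
  using \<open>finite K\<close>
proof (induction K rule: finite_induct)
  case empty
  then show ?case using Q(2) by (simp add: pairs_def)
next
  case (insert a K)
  define f where "f L = Q (\<Sum>k\<in>L. b k) + (\<Sum>k\<in>L. Q (b k))" for L
  have new_pairs: "f {k, a} = polar Q (b k) (b a)" if "k \<in> K" for k
  proof -
    have "k \<noteq> a" using that insert(2) by auto
    then show ?thesis using Q(2) unfolding f_def polar_def by (simp add: add_ac del: add_bit_eq_xor)
  qed
  have "(\<Sum>L\<in>pairs (insert a K). f L) = (\<Sum>L\<in>pairs K. f L) + (\<Sum>k\<in>K. f {k, a})"
  proof -
    have "inj_on (\<lambda>k. {k, a}) K"
      using insert(2) unfolding inj_on_def by (auto simp: doubleton_eq_iff)
    moreover have "pairs K \<inter> (\<lambda>k. {k, a}) ` K = {}" using insert(2) unfolding pairs_def by auto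
    ultimately show ?thesis
      unfolding pairs_insert[OF insert(2)] using insert(1)
      by (simp add: sum.union_disjoint sum.reindex pairs_def)
  qed
  also have "(\<Sum>k\<in>K. f {k, a}) = polar Q (\<Sum>k\<in>K. b k) (b a)"
    by (simp add: new_pairs is_quadratic_polar_sum_left[OF Q(1)])
  finally have "(\<Sum>L\<in>pairs (insert a K). f L) = (\<Sum>L\<in>pairs K. f L) + polar Q (\<Sum>k\<in>K. b k) (b a)" .
  moreover have "Q (\<Sum>k\<in>insert a K. b k) = Q (\<Sum>k\<in>K. b k) + Q (b a) + polar Q (\<Sum>k\<in>K. b k) (b a)"
    using insert(1,2) Q(2) unfolding polar_def by (simp add: add_ac del: add_bit_eq_xor)
  ultimately show ?case
    using insert.IH insert(1,2) unfolding f_def by (simp add: add_ac del: add_bit_eq_xor)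
qed

lemma even_iff_of_int_bit: "even z \<longleftrightarrow> (of_int z :: bit) = 0"
  by (cases "even z") (auto elim!: evenE oddE)

lemma of_bool_eq_one_bit [simp]: "(of_bool (b = 1) :: bit) = b"
  by (cases b) simp_all

lemma quadratic_subset_sum_parity:
  fixes Q :: "bit ^ 'n \<Rightarrow> bit" and b :: "'i \<Rightarrow> bit ^ 'n"
  assumes "is_quadratic Q" "Q 0 = 0" "finite K"
  defines "q \<equiv> \<lambda>L. of_bit (Q (\<Sum>k\<in>L. b k)) :: int"
  shows "even (q K - (\<Sum>k\<in>K. q {k}) - (\<Sum>L\<in>pairs K. q L - (\<Sum>k\<in>L. q {k})))"
  unfolding even_iff_of_int_bit q_def
  by (simp add: of_int_sum quadratic_subset_sum[OF assms(1-3)] del: add_bit_eq_xor)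

lemma cis_eq_cis_iff: "cis a = cis b \<longleftrightarrow> (\<exists>n::int. a = b + 2 * pi * n)"
  by (simp add: complex_eq_iff sin_cos_eq_iff[symmetric] conj_commute)

lemma prod_cis_power: "(\<Prod>j\<in>A. cis (x j) ^ m j) = cis (\<Sum>j\<in>A. of_nat (m j) * x j)"
proof (induction A rule: infinite_finite_induct)
  case (insert k A)
  have "cis (x k) ^ m k = cis (of_nat (m k) * x k)" by (rule Complex.DeMoivre)
  with insert show ?case by (simp add: cis_mult)
qed simp_all

lemma prod_quarter_turns_eq_neg_one_power_iff:
  "(\<Prod>j\<in>A. cis (pi / 2 * t j) ^ m j) = (-1) ^ e
     \<longleftrightarrow> int_multiple 4 ((\<Sum>j\<in>A. t j * of_nat (m j)) - 2 * of_nat e)"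
proof -
  define s where "s = (\<Sum>j\<in>A. t j * of_nat (m j))"
  have lhs: "(\<Prod>j\<in>A. cis (pi / 2 * t j) ^ m j) = cis (pi / 2 * s)"
    unfolding prod_cis_power s_def sum_distrib_left by (simp add: mult_ac)
  have rhs: "(-1::complex) ^ e = cis (pi / 2 * (2 * of_nat e))"
    using Complex.DeMoivre[of pi e] by (simp add: mult_ac)
  have angles: "pi / 2 * s = pi / 2 * (2 * of_nat e) + 2 * pi * of_int n \<longleftrightarrow> s - 2 * of_nat e = 4 * of_int n"
    for n :: int
  proof -
    have "pi / 2 * s = pi / 2 * (2 * of_nat e) + 2 * pi * of_int n
        \<longleftrightarrow> pi / 2 * s = pi / 2 * (2 * of_nat e + 4 * of_int n)"
      by (simp add: algebra_simps)
    then show ?thesis by auto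
  qed
  show ?thesis
    unfolding s_def[symmetric] lhs rhs cis_eq_cis_iff angles int_multiple_def ..
qed

lemma cis_quarter_turn_of_int: "cis (pi / 2 * of_int n) \<in> {1, -1, \<i>, -\<i>}"
proof -
  have "real_of_int n = of_int (n mod 4) + 4 * of_int (n div 4)"
    using mod_div_mult_eq[of n 4] by (metis add.commute mult.commute of_int_add of_int_mult of_int_numeral)
  then have "pi / 2 * of_int n = pi / 2 * of_int (n mod 4) + 2 * pi * of_int (n div 4)"
    by (simp add: algebra_simps)
  then have "cis (pi / 2 * of_int n) = cis (pi / 2 * of_int (n mod 4))"
    unfolding cis_eq_cis_iff by blast
  also have "\<dots> = \<i> ^ nat (n mod 4)"
    using Complex.DeMoivre[of "pi / 2" "nat (n mod 4)"] by (simp add: mult.commute)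
  finally have "cis (pi / 2 * of_int n) = \<i> ^ nat (n mod 4)" .
  moreover have "nat (n mod 4) \<in> {0, 1, 2, 3}" by auto
  ultimately show ?thesis by (auto simp: eval_nat_numeral)
qed

section \<open>Phase conditions on a subspace\<close>

lemma subset_sum_component_odd_iff:
  fixes b :: "'i \<Rightarrow> bit ^ 'n"
  assumes "finite K"
  shows "odd ((\<Sum>k\<in>K. b k) $ j) \<longleftrightarrow> odd (card {k \<in> K. b k $ j = 1})"
  using even_sum_iff[OF assms, of "\<lambda>k. b k $ j"] by (simp add: sum_component)

lemma row_reduced_singleton_pattern:
  assumes "row_reduced m b" "k < m"
  shows "(\<exists>j. {l. l < m \<and> b l $ j = 1} = {k}) \<or> (\<forall>j. k \<notin> {l. l < m \<and> b l $ j = 1})"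
proof (cases "b k = 0")
  case False
  then obtain j where "is_pivot m b k j" using assms unfolding row_reduced_def by blast
  then have "{l. l < m \<and> b l $ j = 1} = {k}" using assms(2) unfolding is_pivot_def by auto
  then show ?thesis by blast
qed simp

lemma phase_condition_iff_parity_congruence:
  fixes b :: "nat \<Rightarrow> bit ^ 'n" and Q :: "bit ^ 'n \<Rightarrow> bit" and w :: "'n \<Rightarrow> real"
  assumes "S = (\<lambda>K. \<Sum>k\<in>K. b k) ` Pow {..<m}"
  shows "(\<forall>x\<in>S. (-1::complex) ^ (of_bit (Q x) :: nat) = (\<Prod>j\<in>UNIV. cis (pi / 2 * w j) ^ (of_bit (x $ j) :: nat)))
     \<longleftrightarrow> (\<forall>K \<subseteq> {..<m}. int_multiple 4
           (parity_sum w (\<lambda>j. {k. k < m \<and> b k $ j = 1}) K - 2 * of_bit (Q (\<Sum>k\<in>K. b k))))"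
proof -
  have parity: "(\<Sum>j\<in>UNIV. w j * of_nat (of_bit ((\<Sum>k\<in>K. b k) $ j)))
      = parity_sum w (\<lambda>j. {k. k < m \<and> b k $ j = 1}) K" if "K \<subseteq> {..<m}" for K
    unfolding parity_sum_def
  proof (rule sum.cong[OF refl])
    fix j
    have "K \<inter> {k. k < m \<and> b k $ j = 1} = {k \<in> K. b k $ j = 1}" using that by auto
    then have "odd ((\<Sum>k\<in>K. b k) $ j) \<longleftrightarrow> odd (card (K \<inter> {k. k < m \<and> b k $ j = 1}))"
      using subset_sum_component_odd_iff[OF finite_subset[OF that finite_lessThan]] by simp
    then show "w j * of_nat (of_bit ((\<Sum>k\<in>K. b k) $ j))
        = w j * of_bool (odd (card (K \<inter> {k. k < m \<and> b k $ j = 1})))"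
      by (simp only: of_nat_of_bool)
  qed
  have "(-1::complex) ^ (of_bit (Q (\<Sum>k\<in>K. b k)) :: nat)
        = (\<Prod>j\<in>UNIV. cis (pi / 2 * w j) ^ (of_bit ((\<Sum>k\<in>K. b k) $ j) :: nat))
      \<longleftrightarrow> int_multiple 4 (parity_sum w (\<lambda>j. {k. k < m \<and> b k $ j = 1}) K - 2 * of_bit (Q (\<Sum>k\<in>K. b k)))"
    if "K \<subseteq> {..<m}" for K
    unfolding eq_commute[of "(-1::complex) ^ _"] prod_quarter_turns_eq_neg_one_power_iff parity[OF that]
    by simp
  then show ?thesis
    unfolding assms by auto
qed

lemma cis_Arg_norm_1: "norm z = 1 \<Longrightarrow> cis (Arg z) = z"
  using rcis_cmod_Arg[of z] by (simp add: cis_rcis_eq)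

lemma phase_parity_system_of_phase_condition:
  fixes b :: "nat \<Rightarrow> bit ^ 'n" and Q :: "bit ^ 'n \<Rightarrow> bit"
  assumes reduced: "row_reduced 5 b" and S: "S = (\<lambda>K. \<Sum>k\<in>K. b k) ` Pow {..<5}"
    and "is_quadratic Q"
    and phases: "\<forall>x\<in>S. (-1::complex) ^ (of_bit (Q x) :: nat)
      = (\<Prod>j\<in>UNIV. cis (pi / 2 * t j) ^ (of_bit (x $ j) :: nat))"
  shows "phase_parity_system t (\<lambda>j. {k. k < 5 \<and> b k $ j = 1}) (\<lambda>K. of_bit (Q (\<Sum>k\<in>K. b k)))"
proof
  have "0 \<in> S" using S by force
  then have "(-1::complex) ^ (of_bit (Q 0) :: nat) = 1" using phases by simp
  then have Q0: "Q 0 = 0" by (cases "Q 0") simp_all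
  show "{k. k < 5 \<and> b k $ j = 1} \<subseteq> {..<5}" for j by auto
  show "(\<exists>j. {l. l < 5 \<and> b l $ j = 1} = {k}) \<or> (\<forall>j. k \<notin> {l. l < 5 \<and> b l $ j = 1})" if "k < 5" for k
    by (rule row_reduced_singleton_pattern[OF reduced that])
  show "int_multiple 4 (parity_sum t (\<lambda>j. {k. k < 5 \<and> b k $ j = 1}) K
      - 2 * of_int (of_bit (Q (\<Sum>k\<in>K. b k))))" if "K \<subseteq> {..<5}" for K
    using phases that unfolding phase_condition_iff_parity_congruence[OF S] by simp
  show "even (of_bit (Q (\<Sum>k\<in>K. b k)) - (\<Sum>k\<in>K. of_bit (Q (\<Sum>k\<in>{k}. b k)))
      - (\<Sum>L\<in>pairs K. of_bit (Q (\<Sum>k\<in>L. b k)) - (\<Sum>k\<in>L. of_bit (Q (\<Sum>k\<in>{k}. b k)))) :: int)"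
    if "K \<subseteq> {..<5}" for K
    using quadratic_subset_sum_parity[OF assms(3) Q0 finite_subset[OF that finite_lessThan], of b] by simp
qed

theorem mainTheorem3:
  fixes S :: "(bit ^ 'n) set" and Q :: "bit ^ 'n \<Rightarrow> bit" and c :: "'n \<Rightarrow> complex"
  assumes "F2_subspace S"
    and "F2_dim S \<le> 5"
    and "is_quadratic Q"
    and "\<forall>j. cmod (c j) = 1"
    and "\<forall>x\<in>S. (-1::complex) ^ (of_bit (Q x) :: nat) = (\<Prod>j\<in>UNIV. c j ^ (of_bit (x $ j) :: nat))"
  shows "\<exists>c' :: 'n \<Rightarrow> complex. (\<forall>j. c' j \<in> {1, -1, \<i>, -\<i>}) \<and>
           (\<forall>x\<in>S. (-1::complex) ^ (of_bit (Q x) :: nat) = (\<Prod>j\<in>UNIV. c' j ^ (of_bit (x $ j) :: nat)))"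
proof -
  obtain b where reduced: "row_reduced 5 b" and S: "S = (\<lambda>K. \<Sum>k\<in>K. b k) ` Pow {..<5}"
    using subspace_eq_subset_sums[OF assms(1,2)] by blast
  define t where "t j = 2 / pi * Arg (c j)" for j
  have "c = (\<lambda>j. cis (pi / 2 * t j))"
    using cis_Arg_norm_1 assms(4) by (simp add: t_def fun_eq_iff)
  then have "phase_parity_system t (\<lambda>j. {k. k < 5 \<and> b k $ j = 1}) (\<lambda>K. of_bit (Q (\<Sum>k\<in>K. b k)))"
    using phase_parity_system_of_phase_condition[OF reduced S assms(3)] assms(5) by simp
  then obtain n :: "'n \<Rightarrow> int" where "\<forall>K \<subseteq> {..<5}. int_multiple 4
      (parity_sum (\<lambda>j. of_int (n j)) (\<lambda>j. {k. k < 5 \<and> b k $ j = 1}) K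
        - 2 * of_int (of_bit (Q (\<Sum>k\<in>K. b k)) :: int))"
    using phase_parity_system.ex_integer_solution by blast
  then have "\<forall>x\<in>S. (-1::complex) ^ (of_bit (Q x) :: nat)
      = (\<Prod>j\<in>UNIV. cis (pi / 2 * of_int (n j)) ^ (of_bit (x $ j) :: nat))"
    unfolding phase_condition_iff_parity_congruence[OF S] by (simp only: of_int_of_bool)
  moreover have "\<forall>j. cis (pi / 2 * of_int (n j)) \<in> {1, -1, \<i>, -\<i>}"
    using cis_quarter_turn_of_int by blast
  ultimately show ?thesis by (intro exI[of _ "\<lambda>j. cis (pi / 2 * of_int (n j))"]) simp
qed

end
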